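(* Let $G$ be a connected graph with maximum degree $\Delta$ and minimum degree $\delta\geq 2$. If $\Delta-\delta\leq (2\delta-1)^{2}$, then $GA(G)>ABC(G)$.
   Context: All graphs are finite, simple and undirected. For a graph $G$ with vertex degrees $d_i$ (degree of vertex $v_i$), the first geometric-arithmetic index is $GA(G)=\sum_{v_iv_j\in E(G)}\frac{2\sqrt{d_id_j}}{d_i+d_j}$ and the atom-bond connectivity index is $ABC(G)=\sum_{v_iv_j\in E(G)}\sqrt{\frac{d_i+d_j-2}{d_id_j}}$. *)

theory Defs
  imports Complex_Main
begin

definition simple_graph :: "'a set \<Rightarrow> 'a set set \<Rightarrow> bool" where
  "simple_graph V E \<longleftrightarrow> finite V \<and> (\<forall>e\<in>E. e \<subseteq> V \<and> card e = 2)"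

definition adj :: "'a set set \<Rightarrow> 'a \<Rightarrow> 'a \<Rightarrow> bool" where
  "adj E u v \<longleftrightarrow> {u, v} \<in> E"

definition degree :: "'a set set \<Rightarrow> 'a \<Rightarrow> nat" where
  "degree E v = card {e \<in> E. v \<in> e}"

definition connected_graph :: "'a set \<Rightarrow> 'a set set \<Rightarrow> bool" where
  "connected_graph V E \<longleftrightarrow> V \<noteq> {} \<and> (\<forall>u\<in>V. \<forall>v\<in>V. (adj E)\<^sup>*\<^sup>* u v)"

definition max_degree :: "'a set \<Rightarrow> 'a set set \<Rightarrow> nat" where
  "max_degree V E = Max (degree E ` V)"

definition min_degree :: "'a set \<Rightarrow> 'a set set \<Rightarrow> nat" where
  "min_degree V E = Min (degree E ` V)"

definition GA_index :: "'a set set \<Rightarrow> real" where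
  "GA_index E = (\<Sum>e\<in>E. 2 * sqrt (\<Prod>x\<in>e. real (degree E x)) / (\<Sum>x\<in>e. real (degree E x)))"

definition ABC_index :: "'a set set \<Rightarrow> real" where
  "ABC_index E = (\<Sum>e\<in>E. sqrt (((\<Sum>x\<in>e. real (degree E x)) - 2) / (\<Prod>x\<in>e. real (degree E x))))"

end

theory Submission
  imports Defs
begin

text \<open>
  The inequality holds edge by edge. For an edge with end degrees \<open>a \<le> b\<close>, squaring shows
  that its ABC term is smaller than its GA term iff \<open>(a + b)\<^sup>2 (a + b - 2) < 4 (a b)\<^sup>2\<close>.
  Writing \<open>b = a + s\<close>, the difference is a cubic in \<open>s\<close> whose leading part
  \<open>s\<^sup>2 ((2a - 1)\<^sup>2 - s)\<close> is nonnegative as long as \<open>s \<le> (2a - 1)\<^sup>2\<close>; what remains is bounded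
  below by a linear function of \<open>s\<close> that is positive at both ends of \<open>[0, (2a - 1)\<^sup>2]\<close>.
  The degree hypothesis guarantees \<open>b - a \<le> \<Delta> - \<delta> \<le> (2\<delta> - 1)\<^sup>2 \<le> (2a - 1)\<^sup>2\<close> on every edge.
\<close>

lemma degree_pair_cubic_less:
  fixes a b :: real
  assumes a: "2 \<le> a" and ab: "a \<le> b" and gap: "b - a \<le> (2 * a - 1)^2"
  shows "(a + b)^2 * (a + b - 2) < 4 * (a * b)^2"
proof -
  define s m where "s = b - a" and "m = (2 * a - 1)^2"
  have s: "0 \<le> s" "s \<le> m" using ab gap by (simp_all add: s_def m_def)
  define L where "L t = 4 * a^2 * ((a - 1)^2 + 1) + t * (8*a^3 - 12*a^2 + 8*a - (2*a - 1) * m)"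
    for t
  have expand: "4 * (a * b)^2 - (a + b)^2 * (a + b - 2)
      = L s + s^2 * (m - s) + (2*a - 1) * s * (m - s)"
    unfolding L_def m_def s_def
    by (simp add: power2_eq_square power3_eq_cube algebra_simps)
  have "s^2 * (m - s) \<ge> 0" "(2*a - 1) * s * (m - s) \<ge> 0"
    using s a by simp_all
  moreover have "L s > 0"
  proof -
    have "L 0 > 0" using a by (simp add: L_def add_nonneg_pos)
    moreover have "L m = 4*a^4 + 2*a*(2*a - 1) + 1"
      unfolding L_def m_def
      by (simp add: power2_eq_square power3_eq_cube power4_eq_xxxx algebra_simps)
    then have "L m > 0" using a by (simp add: add_nonneg_pos)
    moreover have "L s \<ge> L 0 \<or> L s \<ge> L m"
      using s by (cases "8*a^3 - 12*a^2 + 8*a - (2*a - 1) * m \<ge> 0")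
        (auto simp: L_def intro: mult_right_mono mult_right_mono_neg)
    ultimately show ?thesis by linarith
  qed
  ultimately show ?thesis using expand by linarith
qed

lemma ABC_term_less_GA_term:
  fixes a b :: real
  assumes a: "2 \<le> a" and ab: "a \<le> b" and gap: "b - a \<le> (2 * a - 1)^2"
  shows "sqrt ((a + b - 2) / (a * b)) < 2 * sqrt (a * b) / (a + b)"
proof -
  have pos: "a * b > 0" "(a + b)^2 > 0" using a ab by simp_all
  have "(a + b)^2 * (a + b - 2) < 4 * (a * b) * (a * b)"
    using degree_pair_cubic_less[OF assms] by (simp add: power2_eq_square)
  then have "(a + b - 2) / (a * b) < 4 * (a * b) / (a + b)^2"
    using pos by (simp add: divide_simps mult.commute mult.left_commute)
  then have "sqrt ((a + b - 2) / (a * b)) < sqrt (4 * (a * b) / (a + b)^2)" by simp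
  also have "\<dots> = 2 * sqrt (a * b) / (a + b)"
    using a ab by (simp add: real_sqrt_divide real_sqrt_mult)
  finally show ?thesis .
qed

lemma ABC_term_less_GA_term_within_degree_bounds:
  fixes a b d D :: real
  assumes "2 \<le> d" "d \<le> a" "d \<le> b" "a \<le> D" "b \<le> D" "D - d \<le> (2 * d - 1)^2"
  shows "sqrt ((a + b - 2) / (a * b)) < 2 * sqrt (a * b) / (a + b)"
proof -
  have gap: "D - d \<le> (2 * x - 1)^2" if "d \<le> x" for x
    using assms that power_mono[of "2 * d - 1" "2 * x - 1" 2] by linarith
  show ?thesis
  proof (cases "a \<le> b")
    case True
    then show ?thesis using ABC_term_less_GA_term[of a b] gap[of a] assms by linarith
  next
    case False
    then have "sqrt ((b + a - 2) / (b * a)) < 2 * sqrt (b * a) / (b + a)"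
      using ABC_term_less_GA_term[of b a] gap[of b] assms by linarith
    then show ?thesis by (simp add: add.commute mult.commute)
  qed
qed

lemma simple_graph_finite_edges:
  assumes "simple_graph V E"
  shows "finite E"
  using assms unfolding simple_graph_def
  by (meson Pow_iff finite_Pow_iff finite_subset subsetI)

lemma edges_nonempty_if_min_degree_pos:
  assumes "finite V" "V \<noteq> {}" "min_degree V E > 0"
  shows "E \<noteq> {}"
proof
  assume "E = {}"
  then have "degree E ` V = {0}" using assms(2) by (auto simp: degree_def)
  then show False using assms(3) by (simp add: min_degree_def)
qed

lemma degree_within_bounds:
  assumes "finite V" "v \<in> V"
  shows "min_degree V E \<le> degree E v" "degree E v \<le> max_degree V E"
  using assms by (simp_all add: min_degree_def max_degree_def)

theorem theorem3p4:
  fixes V :: "'a set" and E :: "'a set set"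
  assumes "simple_graph V E"
    and "connected_graph V E"
    and "min_degree V E \<ge> 2"
    and "real (max_degree V E) - real (min_degree V E) \<le> (2 * real (min_degree V E) - 1)^2"
  shows "GA_index E > ABC_index E"
proof -
  have V: "finite V" "V \<noteq> {}"
    using assms(1,2) by (simp_all add: simple_graph_def connected_graph_def)
  have edge_less: "sqrt (((\<Sum>x\<in>e. real (degree E x)) - 2) / (\<Prod>x\<in>e. real (degree E x)))
      < 2 * sqrt (\<Prod>x\<in>e. real (degree E x)) / (\<Sum>x\<in>e. real (degree E x))" if "e \<in> E" for e
  proof -
    obtain u v where e: "e = {u, v}" "u \<noteq> v" "u \<in> V" "v \<in> V"
      using assms(1) \<open>e \<in> E\<close> unfolding simple_graph_def by (metis card_2_iff insert_subset)
    show ?thesis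
      using ABC_term_less_GA_term_within_degree_bounds
        [of "real (min_degree V E)" "real (degree E u)" "real (degree E v)" "real (max_degree V E)"]
        degree_within_bounds[OF V(1) e(3)] degree_within_bounds[OF V(1) e(4)] assms(3,4) e(1,2)
      by simp
  qed
  show ?thesis
    unfolding GA_index_def ABC_index_def
    using sum_strict_mono[OF simple_graph_finite_edges[OF assms(1)]
        edges_nonempty_if_min_degree_pos[OF V] edge_less] assms(3)
    by simp
qed

end
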